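(* For $x\in[-1,1]$, in $L^2(\mu_d)$, $$\mathrm{ReLU}(x)=\frac{1}{\beta(\frac12,\frac{d-1}2)(d-1)}G^{(d)}_0(x)+\frac12G^{(d)}_1(x)+\sum_{k\ge1}(-1)^{k+1}\frac{(2k-3)!!}{\beta(\frac12,\frac{d-1}2)\prod_{j=0}^k(d+2j-1)}B(d,2k)G^{(d)}_{2k}(x).$$ Consequently, for every integer $m\ge1$, $$\big\|P^{(d)}_{\ge2m}\mathrm{ReLU}\big\|_{L^2(\mu_d)}^2=\sum_{k\ge m}\frac{((2k-3)!!)^2B(d,2k)}{\beta(\frac12,\frac{d-1}2)^2\prod_{j=0}^k(d+2j-1)^2}.$$
   Context: $\mu_d$ is the law of $x\cdot e_1$ for $x$ uniform on the unit sphere $\mathcal S^{d-1}(1)$, i.e. density $\frac1{\beta(\frac12,\frac{d-1}2)}(1-x^2)^{\frac{d-3}2}$ on $[-1,1]$, with $\beta$ the Beta function. Gegenbauer polynomials: $G^{(d)}_0=1$, $G^{(d)}_1(x)=x$, $G^{(d)}_k(x)=\frac{d+2k-4}{d+k-3}xG^{(d)}_{k-1}(x)-\frac{k-1}{d+k-3}G^{(d)}_{k-2}(x)$; they satisfy $\mathbb E_{\mu_d}[G^{(d)}_kG^{(d)}_j]=\delta_{jk}B(d,k)^{-1}$, where $B(d,0)=1$ and $B(d,k)=\frac{(k+d-3)!(2k+d-2)}{k!(d-2)!}$ for $k\ge1$. Projections: $P^{(d)}_kf=B(d,k)\langle f,G^{(d)}_k\rangle_{L^2(\mu_d)}G^{(d)}_k$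 and $P^{(d)}_{\ge k}=\sum_{\ell\ge k}P^{(d)}_\ell$. Convention $(-1)!!=1$. *)

theory Defs
  imports "HOL-Analysis.Analysis"
begin

definition mu :: "nat \<Rightarrow> real measure" where
  "mu d = density lborel (\<lambda>x. ennreal (indicator {-1..1} x *
      (1 - x\<^sup>2) powr ((real d - 3) / 2) / Beta (1/2) ((real d - 1) / 2)))"

fun Geg :: "nat \<Rightarrow> nat \<Rightarrow> real \<Rightarrow> real" where
  "Geg d 0 x = 1"
| "Geg d (Suc 0) x = x"
| "Geg d (Suc (Suc j)) x =
     (let k = Suc (Suc j) in
       (real d + 2 * real k - 4) / (real d + real k - 3) * x * Geg d (Suc j) x
       - (real k - 1) / (real d + real k - 3) * Geg d j x)"

definition Bdk :: "nat \<Rightarrow> nat \<Rightarrow> real" where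
  "Bdk d k = (if k = 0 then 1 else
     fact (k + d - 3) * (2 * real k + real d - 2) / (fact k * fact (d - 2)))"

text \<open>Double factorial on integers, with n!! = 1 for n \<le> 0 (in particular (-1)!! = 1).\<close>
function dfact :: "int \<Rightarrow> real" where
  "dfact n = (if n \<le> 0 then 1 else real_of_int n * dfact (n - 2))"
  by auto
termination by (relation "Wellfounded.measure (\<lambda>n. nat n)") auto

declare dfact.simps[simp del]

definition relu :: "real \<Rightarrow> real" where
  "relu x = max x 0"

definition Pk :: "nat \<Rightarrow> nat \<Rightarrow> (real \<Rightarrow> real) \<Rightarrow> real \<Rightarrow> real" where
  "Pk d k f x = Bdk d k * (\<integral>y. f y * Geg d k y \<partial>mu d) * Geg d k x"

text \<open>P_{>=k} f = sum_{l>=k} P_l f, the series taken in L^2(mu_d): an L^2 function which is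
  the L^2(mu_d)-limit of the partial sums sum_{l=k}^{N-1} P_l f.\<close>
definition Pge :: "nat \<Rightarrow> nat \<Rightarrow> (real \<Rightarrow> real) \<Rightarrow> real \<Rightarrow> real" where
  "Pge d k f = (SOME g. g \<in> borel_measurable (mu d) \<and> integrable (mu d) (\<lambda>x. (g x)\<^sup>2) \<and>
      (\<lambda>N. \<integral>x. (g x - (\<Sum>l\<in>{k..<N}. Pk d l f x))\<^sup>2 \<partial>mu d) \<longlonglongrightarrow> 0)"

definition L2sq :: "nat \<Rightarrow> (real \<Rightarrow> real) \<Rightarrow> real" where
  "L2sq d f = (\<integral>x. (f x)\<^sup>2 \<partial>mu d)"

end

(*
  Against mu_d, the integral of a polynomial, and of relu times a polynomial, reduces
  (substituting u = x^2 in Euler's Beta integral) to the half-range moments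
  m_n = B((n+1)/2, (d-1)/2) / (2 B(1/2, (d-1)/2)), which satisfy (n + d) m_(n+2) = (n + 1) m_n.
  This recurrence is integration by parts against the weight (1 - x^2)^((d-3)/2).  Together
  with (1 - x^2) G_(n+1)' = (n + 1) (G_n - x G_(n+1)) it gives the orthogonality of the
  Gegenbauer polynomials and ||G_n||^2 = 1/B(d,n).  On the half interval [0,1] the same
  integration by parts leaves the boundary term G_n(0)/beta, which yields the ReLU coefficients
  <relu, G_n> = - G_n(0) / ((n - 1) (n + d - 1) beta) for n >= 2, with G_n(0) explicit.
  Weierstrass approximation makes the Gegenbauer partial sums of relu converge in L^2(mu_d),
  and Bessel's identity turns the tail of the expansion into the stated series.
*)

theory Submission
  imports Defs "HOL-Computational_Algebra.Polynomial"
begin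

section \<open>Moment functionals on polynomials\<close>

definition moment_functional :: "(nat \<Rightarrow> real) \<Rightarrow> real poly \<Rightarrow> real" where
  "moment_functional c p = (\<Sum>i\<le>degree p. coeff p i * c i)"

lemma moment_functional_bound:
  "degree p \<le> n \<Longrightarrow> moment_functional c p = (\<Sum>i\<le>n. coeff p i * c i)"
  unfolding moment_functional_def by (rule sum.mono_neutral_left) (auto simp: coeff_eq_0)

lemma moment_functional_0 [simp]: "moment_functional c 0 = 0"
  by (simp add: moment_functional_def)

lemma moment_functional_add:
  "moment_functional c (p + q) = moment_functional c p + moment_functional c q"
proof -
  define n where "n = max (degree p) (degree q)"
  have "moment_functional c (p + q) = (\<Sum>i\<le>n. coeff p i * c i + coeff q i * c i)"
    unfolding n_def by (subst moment_functional_bound[OF degree_add_le]) (auto simp: algebra_simps)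
  also have "\<dots> = moment_functional c p + moment_functional c q"
    unfolding sum.distrib using moment_functional_bound[of p n c] moment_functional_bound[of q n c]
    by (simp add: n_def)
  finally show ?thesis .
qed

lemma moment_functional_smult:
  "moment_functional c (smult a p) = a * moment_functional c p"
  by (simp add: moment_functional_bound[OF degree_smult_le] moment_functional_def
      sum_distrib_left mult.assoc)

lemma moment_functional_diff:
  "moment_functional c (p - q) = moment_functional c p - moment_functional c q"
  using moment_functional_add[of c p "- q"] moment_functional_smult[of c "-1" q] by simp

lemma moment_functional_sum:
  "moment_functional c (\<Sum>i\<in>A. f i) = (\<Sum>i\<in>A. moment_functional c (f i))"
  by (induction A rule: infinite_finite_induct) (simp_all add: moment_functional_add)

lemma moment_functional_monom: "moment_functional c (monom a n) = a * c n"
proof -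
  have "moment_functional c (monom a n) = (\<Sum>i\<le>n. if i = n then a * c n else 0)"
    unfolding moment_functional_bound[OF degree_monom_le] by (intro sum.cong) (auto simp: coeff_monom)
  then show ?thesis by simp
qed

lemma moment_functional_power_X: "moment_functional c ([:0, 1:] ^ n) = c n"
  using moment_functional_monom[of c 1 n] by (simp add: monom_altdef)

lemma moment_functional_1: "moment_functional c 1 = c 0"
  using moment_functional_power_X[of c 0] by simp

lemma moment_functional_X: "moment_functional c [:0, 1:] = c 1"
  using moment_functional_power_X[of c 1] by simp

lemma moment_functional_X_X: "moment_functional c ([:0, 1:] * [:0, 1:]) = c 2"
  using moment_functional_power_X[of c 2] by (simp add: power2_eq_square)

lemma poly_linear_functional_eqI:
  fixes F H :: "real poly \<Rightarrow> real"
  assumes "\<And>p q. F (p + q) = F p + F q" "\<And>a p. F (smult a p) = a * F p"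
    and "\<And>p q. H (p + q) = H p + H q" "\<And>a p. H (smult a p) = a * H p"
    and "\<And>n. F (monom 1 n) = H (monom 1 n)"
  shows "F p = H p"
proof -
  have sum: "\<Phi> (\<Sum>i\<in>A. f i) = (\<Sum>i\<in>A. \<Phi> (f i))"
    if "\<And>p q. \<Phi> (p + q) = \<Phi> p + \<Phi> q" "\<And>a p. \<Phi> (smult a p) = a * \<Phi> p"
    for \<Phi> :: "real poly \<Rightarrow> real" and A f
    using that(2)[of 0 0] by (induction A rule: infinite_finite_induct) (simp_all add: that(1))
  have "F (monom (coeff p i) i) = H (monom (coeff p i) i)" for i
    using assms(2,4,5) by (metis mult.right_neutral smult_monom)
  then show ?thesis
    by (subst (1 2) poly_as_sum_of_monoms[symmetric])
       (simp add: sum[of F, OF assms(1,2)] sum[of H, OF assms(3,4)])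
qed

(* Integration by parts against a weight w with ((1 - x^2) w)' = - e x w, written on monomials,
   where it is the moment recurrence.  The term c 1 * p(0) is the boundary term at 0 when w lives
   on [0,1] only; for an even weight c 1 = 0. *)
lemma moment_functional_pearson:
  fixes c :: "nat \<Rightarrow> real" and e :: real
  assumes rec: "\<And>n. (real n + e + 1) * c (n + 2) = (real n + 1) * c n"
  shows "moment_functional c ([:1, 0, -1:] * pderiv p)
           = e * (moment_functional c ([:0, 1:] * p) - c 1 * poly p 0)"
proof (rule poly_linear_functional_eqI[where p = p])
  fix n :: nat
  show "moment_functional c ([:1, 0, -1:] * pderiv (monom 1 n))
      = e * (moment_functional c ([:0, 1:] * monom 1 n) - c 1 * poly (monom 1 n) 0)"
  proof (cases n)
    case 0
    then show ?thesis by (simp add: pderiv_monom moment_functional_X)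
  next
    case (Suc k)
    have "[:1, 0, -1:] = monom (1::real) 0 - monom 1 2"
      by (simp add: poly_eq_iff coeff_pCons coeff_monom numeral_2_eq_2 split: nat.split)
    then have lhs: "[:1, 0, -1:] * pderiv (monom 1 n) = monom (real n) k - monom (real n) (k + 2)"
      unfolding Suc pderiv_monom by (simp only: left_diff_distrib mult_monom) simp
    have rhs: "[:0, 1:] * monom (1::real) n = monom 1 (k + 2)"
      by (simp add: Suc monom_altdef)
    show ?thesis
      unfolding lhs rhs using rec[of k]
      by (simp add: Suc moment_functional_diff moment_functional_monom poly_monom algebra_simps)
  qed
qed (simp_all only: pderiv_add pderiv_smult distrib_left mult_smult_right poly_add poly_smult
       moment_functional_add moment_functional_smult, simp_all add: algebra_simps)

section \<open>Gegenbauer polynomials\<close>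

fun geg_poly :: "nat \<Rightarrow> nat \<Rightarrow> real poly" where
  "geg_poly d 0 = 1"
| "geg_poly d (Suc 0) = [:0, 1:]"
| "geg_poly d (Suc (Suc n)) =
     smult ((real d + 2 * real n) / (real d + real n - 1)) ([:0, 1:] * geg_poly d (Suc n))
     - smult ((real n + 1) / (real d + real n - 1)) (geg_poly d n)"

lemma poly_geg_poly [simp]: "poly (geg_poly d n) x = Geg d n x"
  by (induction d n rule: geg_poly.induct) (simp_all add: Let_def algebra_simps)

lemma degree_geg_poly: "degree (geg_poly d n) \<le> n"
proof (induction d n rule: geg_poly.induct)
  case (3 d n)
  have "degree ([:0, 1:] * geg_poly d (Suc n)) \<le> Suc (Suc n)"
    using 3 by (simp add: degree_pCons_le)
  then show ?case
    using 3 by (auto intro!: degree_diff_le degree_smult_le[THEN order.trans])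
qed simp_all

declare geg_poly.simps(3) [simp del] Geg.simps(3) [simp del]
(* Keep products with [:0, 1:] unexpanded, so that the monomial x behaves as an opaque ring element. *)
declare mult_pCons_left [simp del] mult_pCons_right [simp del]

abbreviation beta_d :: "nat \<Rightarrow> real" where
  "beta_d d \<equiv> Beta (1/2) ((real d - 1) / 2)"

(* half_moment d n and moment d n are the integrals of x^n against mu_d over [0,1] and over [-1,1]
   (half_power_integral, power_integral). *)
definition half_moment :: "nat \<Rightarrow> nat \<Rightarrow> real" where
  "half_moment d n = Beta ((real n + 1) / 2) ((real d - 1) / 2) / (2 * beta_d d)"

definition moment :: "nat \<Rightarrow> nat \<Rightarrow> real" where
  "moment d n = (1 + (-1) ^ n) * half_moment d n"

locale gegenbauer =
  fixes d :: nat
  assumes d_ge_2: "2 \<le> d"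
begin

abbreviation G :: "nat \<Rightarrow> real poly" where "G \<equiv> geg_poly d"
abbreviation L :: "real poly \<Rightarrow> real" where "L \<equiv> moment_functional (moment d)"
abbreviation Lh :: "real poly \<Rightarrow> real" where "Lh \<equiv> moment_functional (half_moment d)"

lemma beta_d_pos: "beta_d d > 0"
proof -
  have b: "(real d - 1) / 2 > 0" using d_ge_2 by simp
  then have "1/2 + (real d - 1) / 2 > 0" by linarith
  then show ?thesis unfolding Beta_def
    by (intro divide_pos_pos[OF mult_pos_pos] Gamma_real_pos b) simp_all
qed

lemma half_moment_rec: "(real n + real d) * half_moment d (n + 2) = (real n + 1) * half_moment d n"
proof -
  have "((real n + 1) / 2 + (real d - 1) / 2) * Beta ((real n + 1) / 2 + 1) ((real d - 1) / 2)
        = (real n + 1) / 2 * Beta ((real n + 1) / 2) ((real d - 1) / 2)"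
    by (rule Beta_plus1_left) (auto elim!: nonpos_Ints_cases)
  moreover have "(real n + 1) / 2 + 1 = (real (n + 2) + 1) / 2" by simp
  ultimately show ?thesis
    unfolding half_moment_def using beta_d_pos by (simp add: field_simps)
qed

lemma half_moment_0: "half_moment d 0 = 1/2"
  using beta_d_pos by (simp add: half_moment_def)

lemma half_moment_1: "half_moment d 1 = 1 / ((real d - 1) * beta_d d)"
proof -
  define b where "b = (real d - 1) / 2"
  have b: "b > 0" using d_ge_2 by (simp add: b_def)
  have "Gamma b \<noteq> 0" using Gamma_real_pos[OF b] by linarith
  moreover have "Gamma (b + 1) = b * Gamma b"
    by (rule Gamma_plus1) (use b in \<open>auto elim!: nonpos_Ints_cases\<close>)
  ultimately have "Beta 1 b = 1 / b"
    using b by (simp add: Beta_def add.commute)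
  then show ?thesis by (simp add: half_moment_def b_def)
qed

lemma half_moment_2: "half_moment d 2 = 1 / (2 * real d)"
  using half_moment_rec[of 0] half_moment_0 d_ge_2 by (simp add: field_simps numeral_2_eq_2)

lemma moment_rec: "(real n + real d) * moment d (n + 2) = (real n + 1) * moment d n"
  using half_moment_rec[of n] by (simp add: moment_def)

lemma moment_0: "moment d 0 = 1"
  by (simp add: moment_def half_moment_0)

lemma moment_1: "moment d 1 = 0"
  by (simp add: moment_def)

lemma moment_2: "moment d 2 = 1 / real d"
  by (simp add: moment_def half_moment_2)

lemma moment_pearson: "L ([:1, 0, -1:] * pderiv p) = (real d - 1) * L ([:0, 1:] * p)"
  using moment_functional_pearson[where c = "moment d" and e = "real d - 1"] moment_rec moment_1
  by (simp add: add.commute)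

lemma half_moment_pearson:
  "Lh ([:1, 0, -1:] * pderiv p) = (real d - 1) * Lh ([:0, 1:] * p) - poly p 0 / beta_d d"
  using moment_functional_pearson[where c = "half_moment d" and e = "real d - 1"] half_moment_rec half_moment_1 d_ge_2
  by (simp add: add.commute right_diff_distrib)

lemma geg_poly_rec:
  "smult (real d + real n - 1) (G (n + 2))
     = smult (real d + 2 * real n) ([:0, 1:] * G (n + 1)) - smult (real n + 1) (G n)"
proof -
  have "real d + real n - 1 \<noteq> 0" using d_ge_2 by linarith
  then show ?thesis by (simp add: smult_diff_right geg_poly.simps(3))
qed

lemma Geg_rec:
  "(real d + real n - 1) * Geg d (n + 2) x
     = (real d + 2 * real n) * x * Geg d (n + 1) x - (real n + 1) * Geg d n x"
  using arg_cong[OF geg_poly_rec[of n], of "\<lambda>p. poly p x"] by simp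

lemma geg_poly_lead_rec:
  "(real d + real n - 1) * coeff (G (n + 2)) (n + 2) = (real d + 2 * real n) * coeff (G (n + 1)) (n + 1)"
proof -
  have "coeff (G n) (n + 2) = 0" using degree_geg_poly[of d n] by (intro coeff_eq_0) auto
  then show ?thesis
    using arg_cong[OF geg_poly_rec[of n], of "\<lambda>p. coeff p (n + 2)"] by (simp add: mult_pCons_left)
qed

lemma geg_poly_lead_pos: "coeff (G n) n > 0"
proof (induction n rule: induct_nat_012)
  case (ge2 n)
  have "(real d + real n - 1) * coeff (G (n + 2)) (n + 2) > 0"
    unfolding geg_poly_lead_rec using ge2 d_ge_2 by simp
  moreover have "real d + real n - 1 > 0" using d_ge_2 by linarith
  ultimately show ?case by (simp add: zero_less_mult_iff)
qed simp_all

lemma pderiv_geg_poly_rec: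
  "(real d + real k - 1) * poly (pderiv (G (k + 2))) x
     = (real d + 2 * real k) * (Geg d (k + 1) x + x * poly (pderiv (G (k + 1))) x)
       - (real k + 1) * poly (pderiv (G k)) x"
  using arg_cong[OF geg_poly_rec[of k], of "\<lambda>p. poly (pderiv p) x"]
  by (simp add: pderiv_diff pderiv_smult pderiv_mult pderiv_pCons algebra_simps)

lemma Geg_deriv_step:
  assumes IH1: "(1 - x\<^sup>2) * poly (pderiv (G (n + 1))) x = (real n + 1) * (Geg d n x - x * Geg d (n + 1) x)"
    and IH2: "(1 - x\<^sup>2) * poly (pderiv (G (n + 2))) x = (real n + 2) * (Geg d (n + 1) x - x * Geg d (n + 2) x)"
  shows "(1 - x\<^sup>2) * poly (pderiv (G (n + 3))) x = (real n + 3) * (Geg d (n + 2) x - x * Geg d (n + 3) x)"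
proof -
  define q where "q = 1 - x\<^sup>2"
  define P where "P k = Geg d k x" for k
  define D where "D k = poly (pderiv (G k)) x" for k
  have R: "(real d + real n) * D (n + 3)
      = (real d + 2 * real n + 2) * (P (n + 2) + x * D (n + 2)) - (real n + 2) * D (n + 1)"
    using pderiv_geg_poly_rec[of "n + 1" x] by (simp add: P_def D_def algebra_simps numeral_3_eq_3)
  have P0: "(real n + 1) * P n = (real d + 2 * real n) * x * P (n + 1) - (real d + real n - 1) * P (n + 2)"
    using Geg_rec[of n x] by (simp add: P_def algebra_simps)
  have P3: "(real d + real n) * P (n + 3) = (real d + 2 * real n + 2) * x * P (n + 2) - (real n + 2) * P (n + 1)"
    using Geg_rec[of "n + 1" x] by (simp add: P_def algebra_simps numeral_3_eq_3)
  have D1: "q * D (n + 1) = (real n + 1) * (P n - x * P (n + 1))"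
    and D2: "q * D (n + 2) = (real n + 2) * (P (n + 1) - x * P (n + 2))"
    using IH1 IH2 by (simp_all add: q_def P_def D_def)
  have "(real d + real n) * (q * D (n + 3)) = q * ((real d + real n) * D (n + 3))"
    by simp
  also have "\<dots> = (real d + 2 * real n + 2) * (q * P (n + 2) + x * (q * D (n + 2)))
      - (real n + 2) * (q * D (n + 1))"
    unfolding R by (simp add: algebra_simps)
  also have "\<dots> = (real d + 2 * real n + 2) * (q * P (n + 2) + x * ((real n + 2) * (P (n + 1) - x * P (n + 2))))
      - (real n + 2) * ((real n + 1) * P n - (real n + 1) * x * P (n + 1))"
    unfolding D1 D2 by (simp add: algebra_simps)
  also have "\<dots> = (real n + 3) * ((real d + real n) * P (n + 2)
      - x * ((real d + 2 * real n + 2) * x * P (n + 2) - (real n + 2) * P (n + 1)))"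
    unfolding P0 q_def by (simp add: algebra_simps power2_eq_square)
  also have "\<dots> = (real d + real n) * ((real n + 3) * (P (n + 2) - x * P (n + 3)))"
    unfolding P3[symmetric] by (simp add: algebra_simps)
  finally have "(real d + real n) * (q * D (n + 3)) = (real d + real n) * ((real n + 3) * (P (n + 2) - x * P (n + 3)))" .
  moreover have "real d + real n \<noteq> 0" using d_ge_2 by linarith
  ultimately show ?thesis by (simp add: q_def P_def D_def)
qed

lemma Geg_deriv:
  "(1 - x\<^sup>2) * poly (pderiv (G (n + 1))) x = (real n + 1) * (Geg d n x - x * Geg d (n + 1) x)"
proof (induction n rule: induct_nat_012)
  case 0
  then show ?case by (simp add: pderiv_pCons power2_eq_square)
next
  case 1
  have D2: "(real d - 1) * poly (pderiv (G 2)) x = 2 * real d * x"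
    using pderiv_geg_poly_rec[of 0 x] by (simp add: pderiv_pCons numeral_2_eq_2)
  have G2: "(real d - 1) * Geg d 2 x = real d * x * x - 1"
    using Geg_rec[of 0 x] by (simp add: numeral_2_eq_2)
  have "(real d - 1) * ((1 - x\<^sup>2) * poly (pderiv (G 2)) x) = (1 - x\<^sup>2) * (2 * real d * x)"
    unfolding D2[symmetric] by simp
  also have "\<dots> = 2 * ((real d - 1) * x - x * (real d * x * x - 1))"
    by (simp add: algebra_simps power2_eq_square)
  also have "\<dots> = (real d - 1) * (2 * (Geg d 1 x - x * Geg d 2 x))"
    unfolding G2[symmetric] by (simp add: algebra_simps)
  finally show ?case using d_ge_2 by (simp add: numeral_2_eq_2)
next
  case (ge2 n)
  then show ?case using Geg_deriv_step[where n = n and x = x] by (simp add: numeral_2_eq_2 numeral_3_eq_3)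
qed

lemma geg_poly_deriv:
  "[:1, 0, -1:] * pderiv (G (n + 1)) = smult (real n + 1) (G n - [:0, 1:] * G (n + 1))"
  using Geg_deriv[of _ n] by (intro poly_ext) (simp add: power2_eq_square algebra_simps)

section \<open>Orthogonality and norms\<close>

lemma moment_geg_shift:
  "(real n + real d) * L (G (n + 1) * ([:0, 1:] * r)) - L (G (n + 1) * ([:1, 0, -1:] * pderiv r))
     = (real n + 1) * L (G n * r)"
proof -
  have "[:1, 0, -1:] * pderiv (G (n + 1) * r)
      = G (n + 1) * ([:1, 0, -1:] * pderiv r) + r * ([:1, 0, -1:] * pderiv (G (n + 1)))"
    by (simp add: pderiv_mult algebra_simps)
  also have "\<dots> = G (n + 1) * ([:1, 0, -1:] * pderiv r)
      + smult (real n + 1) (G n * r) - smult (real n + 1) (G (n + 1) * ([:0, 1:] * r))"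
    unfolding geg_poly_deriv
    by (simp add: algebra_simps smult_diff_right)
  finally have "L (G (n + 1) * ([:1, 0, -1:] * pderiv r)) + (real n + 1) * L (G n * r)
      - (real n + 1) * L (G (n + 1) * ([:0, 1:] * r)) = (real d - 1) * L (G (n + 1) * ([:0, 1:] * r))"
    using moment_pearson[of "G (n + 1) * r"]
    by (simp add: moment_functional_add moment_functional_diff moment_functional_smult mult_ac)
  then show ?thesis by (simp add: algebra_simps)
qed

lemma moment_geg_shift_power:
  "(real n + real d + real i + 1) * L (G (n + 1) * [:0, 1:] ^ (i + 2))
     - (real i + 1) * L (G (n + 1) * [:0, 1:] ^ i)
   = (real n + 1) * L (G n * [:0, 1:] ^ (i + 1))"
proof -
  have Q: "[:1, 0, -1:] = 1 - [:0, 1::real:] * [:0, 1:]"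
    by (simp add: one_pCons mult_pCons_left)
  have D: "[:1, 0, -1:] * pderiv ([:0, 1:] ^ (i + 1))
      = smult (real i + 1) ([:0, 1:] ^ i) - smult (real i + 1) ([:0, 1:] ^ (i + 2))"
    unfolding Q pderiv_power_Suc[of _ i, unfolded Suc_eq_plus1]
    by (simp add: pderiv_pCons one_pCons[symmetric] algebra_simps smult_diff_right)
  have X: "[:0, 1:] * [:0, 1:] ^ (i + 1) = [:0, 1::real:] ^ (i + 2)"
    by simp
  show ?thesis
    using moment_geg_shift[of n "[:0, 1:] ^ (i + 1)", unfolded D X]
    by (simp add: algebra_simps moment_functional_diff moment_functional_smult)
qed

lemma moment_geg_rec:
  "(real k + real d) * (real d + real k - 1) * L (G (k + 2)) = (real k + 1) * real k * L (G k)"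
proof -
  have rec: "(real d + real k - 1) * L (G (k + 2))
      = (real d + 2 * real k) * L (G (k + 1) * [:0, 1:]) - (real k + 1) * L (G k)"
    using arg_cong[OF geg_poly_rec[of k], of L]
    by (simp add: moment_functional_diff moment_functional_smult mult.commute)
  have shift: "(real k + real d) * L (G (k + 1) * [:0, 1:]) = (real k + 1) * L (G k)"
    using moment_geg_shift[of k 1] by simp
  have "(real k + real d) * (real d + real k - 1) * L (G (k + 2))
      = (real d + 2 * real k) * ((real k + real d) * L (G (k + 1) * [:0, 1:]))
        - (real k + real d) * (real k + 1) * L (G k)"
    unfolding mult.assoc[of "real k + real d"] rec by (simp add: algebra_simps)
  also have "\<dots> = (real k + 1) * real k * L (G k)"
    unfolding shift by (simp add: algebra_simps)
  finally show ?thesis .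
qed

lemma moment_geg_eq_0: "L (G (n + 1)) = 0"
proof (induction n rule: nat_induct2)
  case 0
  then show ?case by (simp add: moment_functional_X moment_def)
next
  case 1
  then show ?case using moment_geg_rec[of 0] d_ge_2 by (simp add: numeral_2_eq_2)
next
  case (step n)
  have "(real n + 1 + real d) * (real d + real n) * L (G (n + 3)) = 0"
    using moment_geg_rec[of "n + 1"] step by (simp add: numeral_3_eq_3 algebra_simps)
  moreover have "(real n + 1 + real d) * (real d + real n) \<noteq> 0" using d_ge_2 by simp
  ultimately show ?case by (simp add: numeral_3_eq_3)
qed

lemma moment_geg_power_eq_0: "j < n \<Longrightarrow> L (G n * [:0, 1:] ^ j) = 0"
proof (induction n arbitrary: j)
  case (Suc m)
  have "j < m + 1 \<longrightarrow> L (G (m + 1) * [:0, 1:] ^ j) = 0"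
  proof (induction j rule: nat_induct2)
    case 0
    then show ?case using moment_geg_eq_0 by simp
  next
    case 1
    have "(real m + real d) * L (G (m + 1) * [:0, 1:]) = (real m + 1) * L (G m)"
      using moment_geg_shift[of m 1] by simp
    moreover have "m \<ge> 1 \<longrightarrow> L (G m) = 0" using Suc.IH[of 0] by simp
    moreover have "real m + real d \<noteq> 0" using d_ge_2 by linarith
    ultimately show ?case by auto
  next
    case (step i)
    then show ?case
      using moment_geg_shift_power[of m i] Suc.IH[of "i + 1"] d_ge_2
      by (auto simp: add_nonneg_pos)
  qed
  then show ?case using Suc.prems by simp
qed simp

lemma moment_geg_mult_eq_0: "degree r < n \<Longrightarrow> L (G n * r) = 0"
proof -
  assume "degree r < n"
  have "L (G n * r) = (\<Sum>i\<le>degree r. coeff r i * L (G n * [:0, 1:] ^ i))"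
    by (subst poly_as_sum_of_monoms[symmetric])
       (simp add: monom_altdef sum_distrib_left moment_functional_sum moment_functional_smult)
  also have "\<dots> = 0"
    using \<open>degree r < n\<close> by (simp add: moment_geg_power_eq_0)
  finally show ?thesis .
qed

lemma moment_geg_orthogonal: "i \<noteq> j \<Longrightarrow> L (G i * G j) = 0"
  using moment_geg_mult_eq_0[of "G i" j] moment_geg_mult_eq_0[of "G j" i]
    degree_geg_poly[of d i] degree_geg_poly[of d j]
  by (cases "i < j") (simp_all add: mult.commute)

lemma moment_geg_leading:
  "(2 * real n + real d) * L (G (n + 1) * [:0, 1:] ^ (n + 1)) = (real n + 1) * L (G n * [:0, 1:] ^ n)"
proof (cases n)
  case 0
  then show ?thesis using moment_geg_shift[of 0 1] by simp
next
  case (Suc i)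
  then show ?thesis
    using moment_geg_shift_power[of n i] moment_geg_power_eq_0[of i "n + 1"]
    by (simp add: algebra_simps)
qed

lemma moment_geg_sq_lead: "L (G n * G n) = coeff (G n) n * L (G n * [:0, 1:] ^ n)"
proof -
  define R where "R = G n - smult (coeff (G n) n) ([:0, 1:] ^ n)"
  have "degree R \<le> n"
    unfolding R_def using degree_geg_poly[of d n]
    by (intro degree_diff_le) (auto simp: degree_monom_le monom_altdef[symmetric])
  moreover have "coeff R n = 0"
    by (simp add: R_def monom_altdef[symmetric])
  ultimately have "R = 0 \<or> degree R < n"
    using le_neq_implies_less leading_coeff_0_iff by metis
  then have "L (G n * R) = 0"
    using moment_geg_mult_eq_0 by auto
  then show ?thesis
    by (simp add: R_def algebra_simps moment_functional_diff moment_functional_smult)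
qed

lemma Bdk_pos: "Bdk d n > 0"
  unfolding Bdk_def using d_ge_2 by (auto intro!: divide_pos_pos mult_pos_pos)

lemma Bdk_1: "Bdk d 1 = real d"
proof -
  obtain e where "d = e + 2" using d_ge_2 by (metis add.commute le_Suc_ex)
  then show ?thesis by (simp add: Bdk_def)
qed

lemma Bdk_rec:
  "(real n + 2) * (2 * real n + real d) * Bdk d (n + 2)
     = (real n + real d - 1) * (2 * real n + real d + 2) * Bdk d (n + 1)"
proof -
  obtain e where d: "d = e + 2" using d_ge_2 by (metis add.commute le_Suc_ex)
  define A where "A = fact (n + e) / (fact (n + 1) * fact e :: real)"
  have "Bdk d (n + 1) = (2 * real n + real d) * A"
    by (simp add: Bdk_def A_def d algebra_simps)
  moreover have "Bdk d (n + 2) = (real n + real d - 1) * (2 * real n + real d + 2) * A / (real n + 2)"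
  proof -
    have "n + 2 + d - 3 = Suc (n + e)" "d - 2 = e" using d by simp_all
    moreover have "fact (n + 2) = (real n + 2) * fact (n + 1)"
      by (simp add: algebra_simps)
    ultimately have "Bdk d (n + 2)
        = (real n + real e + 1) * fact (n + e) * (2 * real n + real e + 4) / ((real n + 2) * fact (n + 1) * fact e)"
      by (simp add: Bdk_def d algebra_simps)
    also have "\<dots> = (real n + real e + 1) * (2 * real n + real e + 4) * A / (real n + 2)"
      by (simp add: A_def mult_ac)
    finally show ?thesis by (simp add: d add_ac)
  qed
  ultimately show ?thesis by simp
qed

lemma moment_geg_sq: "L (G n * G n) = 1 / Bdk d n"
proof -
  have "Bdk d n * coeff (G n) n * L (G n * [:0, 1:] ^ n) = 1"
  proof (induction n rule: induct_nat_012)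
    case 0
    then show ?case by (simp add: Bdk_def moment_functional_1 moment_0)
  next
    case 1
    then show ?case using Bdk_1 d_ge_2 by (simp add: One_nat_def moment_functional_X_X moment_2)
  next
    case (ge2 n)
    define K where "K = (real n + 2) * (2 * real n + real d) * (real d + real n - 1) * (2 * real n + real d + 2)"
    have "K \<noteq> 0" using d_ge_2 by (simp add: K_def)
    define N where "N k = L (G k * [:0, 1:] ^ k)" for k
    define c where "c k = coeff (G k) k" for k
    have N: "(2 * real n + real d + 2) * N (n + 2) = (real n + 2) * N (n + 1)"
      using moment_geg_leading[of "n + 1"] by (simp add: N_def algebra_simps)
    have c: "(real d + real n - 1) * c (n + 2) = (real d + 2 * real n) * c (n + 1)"
      using geg_poly_lead_rec[of n] by (simp add: c_def)
    have "Bdk d (n + 2) * c (n + 2) * N (n + 2) * K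
        = ((real n + 2) * (2 * real n + real d) * Bdk d (n + 2))
          * ((real d + real n - 1) * c (n + 2)) * ((2 * real n + real d + 2) * N (n + 2))"
      by (simp add: K_def algebra_simps)
    also have "\<dots> = Bdk d (n + 1) * c (n + 1) * N (n + 1) * K"
      unfolding Bdk_rec N c by (simp add: K_def algebra_simps)
    finally have "Bdk d (n + 2) * c (n + 2) * N (n + 2) * K = Bdk d (n + 1) * c (n + 1) * N (n + 1) * K" .
    then show ?case using ge2 \<open>K \<noteq> 0\<close> by (simp add: N_def c_def numeral_2_eq_2)
  qed
  then show ?thesis using Bdk_pos[of n] by (simp add: moment_geg_sq_lead field_simps)
qed

lemma geg_poly_span: "degree q \<le> n \<Longrightarrow> \<exists>\<alpha>. q = (\<Sum>l\<le>n. smult (\<alpha> l) (G l))"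
proof (induction n arbitrary: q)
  case 0
  then have "q = [:coeff q 0:]" using degree_0_id[of q] by simp
  then have "q = smult (coeff q 0) (G 0)" by (simp add: one_pCons)
  then show ?case by (intro exI[of _ "\<lambda>_. coeff q 0"]) simp
next
  case (Suc n)
  define c where "c = coeff q (Suc n) / coeff (G (Suc n)) (Suc n)"
  define r where "r = q - smult c (G (Suc n))"
  have "degree r \<le> Suc n"
    unfolding r_def using Suc.prems degree_geg_poly[of d "Suc n"]
    by (intro degree_diff_le) (auto intro: degree_smult_le[THEN order.trans])
  moreover have "coeff r (Suc n) = 0"
    unfolding r_def c_def using geg_poly_lead_pos[of "Suc n"] by simp
  ultimately have "degree r \<le> n"
    by (metis le_SucE leading_coeff_0_iff degree_0 le0)
  then obtain \<alpha> where "r = (\<Sum>l\<le>n. smult (\<alpha> l) (G l))" using Suc.IH by blast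
  then have "q = (\<Sum>l\<le>Suc n. smult ((\<alpha>(Suc n := c)) l) (G l))"
    unfolding r_def by (simp add: algebra_simps)
  then show ?case by blast
qed

end

section \<open>The ReLU coefficients\<close>

lemma dfact_odd: "dfact (2 * int k + 1) = (2 * real k + 1) * dfact (2 * int k - 1)"
  by (subst dfact.simps) (simp add: algebra_simps)

(* The coefficient of relu against G_n in L^2(mu_d), see Pk_relu. *)
definition relu_coeff :: "nat \<Rightarrow> nat \<Rightarrow> real" where
  "relu_coeff d n = moment_functional (half_moment d) ([:0, 1:] * geg_poly d n)"

context gegenbauer
begin

lemma Geg_at_0_odd: "Geg d (2 * k + 1) 0 = 0"
proof (induction k)
  case (Suc k)
  have "(real d + 2 * real k) * Geg d (2 * k + 3) 0 = 0"
    using Geg_rec[of "2 * k + 1" 0] Suc by (simp add: numeral_3_eq_3)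
  moreover have "real d + 2 * real k \<noteq> 0" using d_ge_2 by linarith
  ultimately show ?case by (simp add: numeral_3_eq_3)
qed simp

lemma Geg_at_0_even:
  "Geg d (2 * k) 0 = (-1) ^ k * dfact (2 * int k - 1) / (\<Prod>j<k. real d + 2 * real j - 1)"
proof -
  have "Geg d (2 * k) 0 * (\<Prod>j<k. real d + 2 * real j - 1) = (-1) ^ k * dfact (2 * int k - 1)"
  proof (induction k)
    case 0
    then show ?case by (subst dfact.simps) simp
  next
    case (Suc k)
    have rec: "(real d + 2 * real k - 1) * Geg d (2 * k + 2) 0 = - (2 * real k + 1) * Geg d (2 * k) 0"
      using Geg_rec[of "2 * k" 0] by (simp add: algebra_simps)
    have "Geg d (2 * Suc k) 0 * (\<Prod>j<Suc k. real d + 2 * real j - 1)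
        = ((real d + 2 * real k - 1) * Geg d (2 * k + 2) 0) * (\<Prod>j<k. real d + 2 * real j - 1)"
      by simp
    also have "\<dots> = - (2 * real k + 1) * (Geg d (2 * k) 0 * (\<Prod>j<k. real d + 2 * real j - 1))"
      unfolding rec by simp
    finally have "Geg d (2 * Suc k) 0 * (\<Prod>j<Suc k. real d + 2 * real j - 1)
        = - (2 * real k + 1) * (Geg d (2 * k) 0 * (\<Prod>j<k. real d + 2 * real j - 1))" .
    then show ?case
      unfolding Suc.IH using dfact_odd[of k] by (simp add: algebra_simps)
  qed
  moreover have "(\<Prod>j<k. real d + 2 * real j - 1) > 0"
    using d_ge_2 by (intro prod_pos) auto
  ultimately show ?thesis by (intro eq_divide_imp) (use d_ge_2 in auto)
qed

lemma relu_coeff_0: "relu_coeff d 0 = 1 / ((real d - 1) * beta_d d)"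
  using half_moment_1 by (simp add: relu_coeff_def moment_functional_X)

lemma relu_coeff_1: "relu_coeff d 1 = 1 / (2 * real d)"
  by (simp add: relu_coeff_def moment_functional_X_X half_moment_2)

lemma relu_coeff_rec:
  "(real n + real d) * relu_coeff d (n + 1) = (real n + 1) * Lh (G n) + Geg d (n + 1) 0 / beta_d d"
  using half_moment_pearson[of "G (n + 1)"]
  unfolding geg_poly_deriv relu_coeff_def
  by (simp add: moment_functional_smult moment_functional_diff algebra_simps)

lemma half_moment_geg_step:
  assumes IH: "real n * Lh (G n) = - Geg d (n + 1) 0 / beta_d d"
  shows "(real n + real d) * Lh (G (n + 2)) = - real n * Lh (G n)"
proof -
  define u where "u = Lh (G n)"
  have a: "(real n + real d) * relu_coeff d (n + 1) = u"
    using relu_coeff_rec[of n] IH by (simp add: u_def algebra_simps)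
  have rec: "(real d + real n - 1) * Lh (G (n + 2))
      = (real d + 2 * real n) * relu_coeff d (n + 1) - (real n + 1) * u"
    using arg_cong[OF geg_poly_rec[of n], of Lh]
    by (simp add: u_def relu_coeff_def moment_functional_diff moment_functional_smult)
  have "(real d + real n - 1) * ((real n + real d) * Lh (G (n + 2)))
      = (real n + real d) * ((real d + real n - 1) * Lh (G (n + 2)))"
    by (simp add: algebra_simps)
  also have "\<dots> = (real d + 2 * real n) * ((real n + real d) * relu_coeff d (n + 1))
      - (real n + real d) * (real n + 1) * u"
    unfolding rec by (simp add: algebra_simps)
  also have "\<dots> = (real d + real n - 1) * (- real n * u)"
    unfolding a by (simp add: algebra_simps)
  finally have "(real d + real n - 1) * ((real n + real d) * Lh (G (n + 2)))
      = (real d + real n - 1) * (- real n * u)" .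
  moreover have "real d + real n - 1 \<noteq> 0" using d_ge_2 by linarith
  ultimately show ?thesis
    unfolding u_def using mult_left_cancel by blast
qed

lemma half_moment_geg: "real n * Lh (G n) = - Geg d (n + 1) 0 / beta_d d"
proof (induction n rule: nat_induct2)
  case 0
  then show ?case by simp
next
  case 1
  have "(real d - 1) * Geg d 2 0 = -1"
    using Geg_rec[of 0 0] by (simp add: numeral_2_eq_2)
  then have "Geg d 2 0 = -1 / (real d - 1)"
    using d_ge_2 by (simp add: field_simps)
  then show ?case using half_moment_1 by (simp add: moment_functional_X numeral_2_eq_2)
next
  case (step n)
  have g3: "(real n + real d) * Geg d (n + 3) 0 = - ((real n + 2) * Geg d (n + 1) 0)"
    using Geg_rec[of "n + 1" 0] by (simp add: numeral_3_eq_3 algebra_simps)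
  have "(real n + real d) * (real (n + 2) * Lh (G (n + 2)))
      = (real n + 2) * ((real n + real d) * Lh (G (n + 2)))"
    by (simp add: algebra_simps)
  also have "\<dots> = (real n + 2) * (- (real n * Lh (G n)))"
    unfolding half_moment_geg_step[OF step] by simp
  also have "\<dots> = (real n + 2) * Geg d (n + 1) 0 / beta_d d"
    using step by simp
  also have "\<dots> = - ((real n + real d) * Geg d (n + 3) 0) / beta_d d"
    unfolding g3 by simp
  also have "\<dots> = (real n + real d) * (- Geg d (n + 2 + 1) 0 / beta_d d)"
    by (simp add: numeral_3_eq_3)
  finally have "(real n + real d) * (real (n + 2) * Lh (G (n + 2)))
      = (real n + real d) * (- Geg d (n + 2 + 1) 0 / beta_d d)" .
  moreover have "real n + real d \<noteq> 0" using d_ge_2 by linarith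
  ultimately show ?case using mult_left_cancel by blast
qed

lemma relu_coeff_Geg_at_0:
  "(real n + 1) * (real n + real d + 1) * relu_coeff d (n + 2) = - Geg d (n + 2) 0 / beta_d d"
proof -
  define u where "u = Lh (G (n + 1))"
  define g where "g = Geg d (n + 2) 0 / beta_d d"
  have a: "(real n + real d + 1) * relu_coeff d (n + 2) = (real n + 2) * u + g"
    using relu_coeff_rec[of "n + 1"] by (simp add: u_def g_def algebra_simps numeral_2_eq_2)
  have u: "(real n + 1) * u = - g"
    using half_moment_geg[of "n + 1"] by (simp add: u_def g_def numeral_2_eq_2 add.commute)
  have "(real n + 1) * (real n + real d + 1) * relu_coeff d (n + 2) = (real n + 2) * ((real n + 1) * u) + (real n + 1) * g"
    by (simp only: mult.assoc a) (simp add: algebra_simps)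
  also have "\<dots> = - g" unfolding u by (simp add: algebra_simps)
  finally show ?thesis by (simp add: g_def)
qed

lemma relu_coeff_odd: "k \<ge> 1 \<Longrightarrow> relu_coeff d (2 * k + 1) = 0"
proof -
  assume "k \<ge> 1"
  then obtain i where k: "k = i + 1" by (metis add.commute le_Suc_ex)
  have "(2 * real i + 2) * (2 * real i + real d + 2) * relu_coeff d (2 * k + 1) = 0"
    using relu_coeff_Geg_at_0[of "2 * i + 1"] Geg_at_0_odd[of k] by (simp add: k algebra_simps)
  moreover have "(2 * real i + 2) * (2 * real i + real d + 2) \<noteq> 0" by simp
  ultimately show ?thesis by simp
qed

lemma relu_coeff_even:
  assumes "k \<ge> 1"
  shows "relu_coeff d (2 * k)
    = (-1) ^ (k + 1) * dfact (2 * int k - 3) / (beta_d d * (\<Prod>j\<in>{0..k}. real d + 2 * real j - 1))"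
proof -
  obtain i where k: "k = i + 1" using assms by (metis add.commute le_Suc_ex)
  define P where "P = (\<Prod>j<k. real d + 2 * real j - 1)"
  define D where "D = dfact (2 * int i - 1)"
  have P: "P > 0" unfolding P_def using d_ge_2 by (intro prod_pos) auto
  have prod: "(\<Prod>j\<in>{0..k}. real d + 2 * real j - 1) = P * (2 * real i + real d + 1)"
    by (simp add: P_def k atLeast0AtMost lessThan_Suc_atMost[symmetric] algebra_simps)
  have "(2 * real i + 1) * (relu_coeff d (2 * k) * (2 * real i + real d + 1))
      = (2 * real i + 1) * ((-1) ^ i * D / (P * beta_d d))"
    using relu_coeff_Geg_at_0[of "2 * i"] Geg_at_0_even[of k] dfact_odd[of i]
    by (simp add: k P_def D_def algebra_simps)
  moreover have "2 * real i + 1 \<noteq> 0" by simp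
  ultimately have e: "relu_coeff d (2 * k) * (2 * real i + real d + 1) = (-1) ^ i * D / (P * beta_d d)"
    using mult_left_cancel by blast
  have "relu_coeff d (2 * k) = (-1) ^ i * D / (P * beta_d d) / (2 * real i + real d + 1)"
    by (rule eq_divide_imp[OF _ e]) simp
  moreover have "dfact (2 * int k - 3) = D" by (simp add: D_def k algebra_simps)
  ultimately show ?thesis unfolding prod by (simp add: k mult_ac)
qed

end

section \<open>Integrals against \<open>\<mu>\<^sub>d\<close>\<close>

lemma square_powr_half_mult: "x > 0 \<Longrightarrow> (x\<^sup>2) powr ((real n + 1) / 2 - 1) * x = x ^ n"
  for x :: real
proof -
  assume x: "x > 0"
  have "2 * ((real n + 1) / 2 - 1) = real n - 1" by simp
  then have "(x powr 2) powr ((real n + 1) / 2 - 1) = x powr (real n - 1)"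
    by (simp only: powr_powr)
  then show ?thesis
    using x powr_add[of x "real n - 1" 1] by (simp add: powr_realpow)
qed

lemma Beta_square_substitution:
  fixes b :: real
  assumes b: "b > 0"
  shows "integrable lborel (\<lambda>x. indicator {0..1} x * (x ^ n * (1 - x\<^sup>2) powr (b - 1)))"
    and "(\<integral>x. indicator {0..1} x * (x ^ n * (1 - x\<^sup>2) powr (b - 1)) \<partial>lborel) = Beta ((real n + 1) / 2) b / 2"
proof -
  define a where "a = (real n + 1) / 2"
  have a: "a > 0" unfolding a_def by simp
  define f where "f u = u powr (a - 1) * (1 - u) powr (b - 1)" for u :: real
  have fi: "set_integrable lborel {0..1} f" unfolding f_def by (rule integrable_Beta[OF a b])
  have fI: "(LINT u:{0..1}|lborel. f u) = Beta a b"
    using set_borel_integral_eq_integral(2)[OF fi] has_integral_Beta_real[OF a b]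
    unfolding f_def by (simp add: integral_unique)
  have der: "\<And>x. x \<in> {0..1} \<Longrightarrow> ((\<lambda>x::real. x\<^sup>2) has_real_derivative 2 * x) (at x)"
    by (auto intro!: derivative_eq_intros)
  have cont: "continuous_on {0..1} (\<lambda>x::real. 2 * x)" by (intro continuous_intros)
  have fi': "set_integrable lborel {(\<lambda>x::real. x\<^sup>2) 0..(\<lambda>x. x\<^sup>2) 1} f" using fi by simp
  note S = integral_substitution[OF fi' der cont _ zero_le_one]
  define g where "g x = indicator {0..1} x * (x ^ n * (1 - x\<^sup>2) powr (b - 1))" for x :: real
  have ae: "AE x in lborel. indicator {0..1} x * (f (x\<^sup>2) * (2 * x)) = 2 * g x"
    using AE_lborel_singleton[of 0]
  proof eventually_elim
    case (elim x)
    then show ?case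
      using square_powr_half_mult[of x n]
      by (cases "x \<in> {0..1}") (auto simp: f_def g_def a_def algebra_simps)
  qed
  have m: "(\<lambda>x. indicator {0..1} x * (f (x\<^sup>2) * (2 * x))) \<in> borel_measurable lborel"
    "(\<lambda>x. 2 * g x) \<in> borel_measurable lborel"
    unfolding f_def g_def by measurable
  have "integrable lborel (\<lambda>x. 2 * g x)"
    using integrable_cong_AE[OF m ae] S(1) unfolding set_integrable_def by (simp add: mult.commute)
  then show "integrable lborel g" by simp
  have "2 * (\<integral>x. g x \<partial>lborel) = (\<integral>x. indicator {0..1} x * (f (x\<^sup>2) * (2 * x)) \<partial>lborel)"
    using integral_cong_AE[OF m ae] by simp
  also have "\<dots> = (LBINT x. f x * indicator {0..1} x)"
    using S(2) by (simp add: mult.commute)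
  also have "\<dots> = Beta a b" using fI unfolding set_lebesgue_integral_def by (simp add: mult.commute)
  finally show "(\<integral>x. g x \<partial>lborel) = Beta ((real n + 1) / 2) b / 2"
    unfolding a_def by simp
qed

definition sphere_density :: "nat \<Rightarrow> real \<Rightarrow> real" where
  "sphere_density d x = indicator {-1..1} x * (1 - x\<^sup>2) powr ((real d - 3) / 2) / beta_d d"

lemma mu_eq_density: "mu d = density lborel (\<lambda>x. ennreal (sphere_density d x))"
  unfolding mu_def sphere_density_def ..

lemma sphere_density_minus: "sphere_density d (- x) = sphere_density d x"
  by (auto simp: sphere_density_def indicator_def)

lemma sphere_density_outside: "x \<notin> {-1..1} \<Longrightarrow> sphere_density d x = 0"
  by (simp add: sphere_density_def)

lemma sphere_density_measurable [measurable]: "sphere_density d \<in> borel_measurable borel"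
  unfolding sphere_density_def by measurable

lemma relu_measurable [measurable]: "relu \<in> borel_measurable borel"
  unfolding relu_def by measurable

lemma poly_measurable [measurable]: "poly p \<in> borel_measurable borel"
  for p :: "real poly"
  by (intro borel_measurable_continuous_onI continuous_on_poly continuous_on_id)

lemma sphere_density_split:
  assumes "x \<noteq> 0"
  shows "sphere_density d x * x ^ n
    = indicator {0..1} x * x ^ n * sphere_density d x
      + (-1) ^ n * (indicator {0..1} (- x) * (- x) ^ n * sphere_density d (- x))"
proof (cases "x \<in> {-1..1}")
  case True
  consider "0 < x" | "x < 0" using assms by linarith
  then show ?thesis
  proof cases
    case 1
    then have "indicator {0..1} x = (1::real)" "indicator {0..1} (- x) = (0::real)"
      using True by auto
    then show ?thesis by simp
  next
    case 2
    then have "indicator {0..1} x = (0::real)" "indicator {0..1} (- x) = (1::real)"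
      using True by auto
    moreover have "(-1) ^ n * (- x) ^ n = x ^ n"
      by (simp add: power_mult_distrib[symmetric])
    ultimately show ?thesis
      by (simp add: sphere_density_minus mult.assoc[symmetric])
  qed
next
  case False
  then have "- x \<notin> {-1..1}" by auto
  with False show ?thesis by (simp add: sphere_density_outside)
qed

lemma borel_measurable_mu: "f \<in> borel_measurable (mu d) \<longleftrightarrow> f \<in> borel_measurable borel"
  unfolding mu_eq_density by simp

context gegenbauer
begin

lemma sphere_density_nonneg: "sphere_density d x \<ge> 0"
  unfolding sphere_density_def using beta_d_pos by (auto simp: indicator_def)

lemma integral_mu:
  assumes [measurable]: "f \<in> borel_measurable borel"
  shows "integrable (mu d) f \<longleftrightarrow> integrable lborel (\<lambda>x. sphere_density d x * f x)"
    and "integral\<^sup>L (mu d) f = (\<integral>x. sphere_density d x * f x \<partial>lborel)"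
  unfolding mu_eq_density
  by (subst integrable_density integral_density; (simp add: sphere_density_nonneg)?)+

lemma AE_mu_interval: "AE x in mu d. x \<in> {-1..1}"
  unfolding mu_eq_density
  by (subst AE_density) (auto intro!: AE_I2 simp: sphere_density_def indicator_def split: if_splits)

lemma half_power_integral:
  "integrable lborel (\<lambda>x. indicator {0..1} x * x ^ n * sphere_density d x)"
  "(\<integral>x. indicator {0..1} x * x ^ n * sphere_density d x \<partial>lborel) = half_moment d n"
proof -
  have b: "(real d - 1) / 2 > 0" using d_ge_2 by simp
  define g where "g x = indicator {0..1} x * (x ^ n * (1 - x\<^sup>2) powr ((real d - 1) / 2 - 1))" for x :: real
  have ex: "(real d - 1) / 2 - 1 = (real d - 3) / 2" by (simp add: field_simps)
  have eq: "(\<lambda>x. indicator {0..1} x * x ^ n * sphere_density d x) = (\<lambda>x. g x / beta_d d)"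
    by (auto simp: g_def sphere_density_def indicator_def ex)
  show "integrable lborel (\<lambda>x. indicator {0..1} x * x ^ n * sphere_density d x)"
    unfolding eq using Beta_square_substitution(1)[OF b, of n] by (simp add: g_def)
  have "(\<integral>x. g x / beta_d d \<partial>lborel) = (\<integral>x. g x \<partial>lborel) / beta_d d"
    by simp
  also have "\<dots> = Beta ((real n + 1) / 2) ((real d - 1) / 2) / 2 / beta_d d"
    unfolding g_def Beta_square_substitution(2)[OF b] ..
  finally show "(\<integral>x. indicator {0..1} x * x ^ n * sphere_density d x \<partial>lborel) = half_moment d n"
    unfolding eq by (simp add: half_moment_def)
qed

lemma relu_power_integral:
  "integrable (mu d) (\<lambda>x. relu x * x ^ n)"
  "integral\<^sup>L (mu d) (\<lambda>x. relu x * x ^ n) = half_moment d (n + 1)"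
proof -
  have m: "(\<lambda>x. relu x * x ^ n) \<in> borel_measurable borel" by measurable
  have eq: "(\<lambda>x. sphere_density d x * (relu x * x ^ n))
      = (\<lambda>x. indicator {0..1} x * x ^ (n + 1) * sphere_density d x)"
    by (rule ext, cases "0 < x"; cases "x \<le> 1") (simp_all add: relu_def sphere_density_def indicator_def)
  show "integrable (mu d) (\<lambda>x. relu x * x ^ n)"
    unfolding integral_mu(1)[OF m] eq by (rule half_power_integral)
  show "integral\<^sup>L (mu d) (\<lambda>x. relu x * x ^ n) = half_moment d (n + 1)"
    unfolding integral_mu(2)[OF m] eq by (rule half_power_integral)
qed

lemma power_integral:
  "integrable (mu d) (\<lambda>x. x ^ n)"
  "integral\<^sup>L (mu d) (\<lambda>x. x ^ n) = moment d n"
proof -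
  have mp: "(\<lambda>x::real. x ^ n) \<in> borel_measurable borel" by measurable
  define h where "h = (\<lambda>x. indicator {0..1} x * x ^ n * sphere_density d x)"
  have h: "integrable lborel h" "integral\<^sup>L lborel h = half_moment d n"
    using half_power_integral[of n] by (simp_all add: h_def)
  have h': "integrable lborel (\<lambda>x. h (- x))" "(\<integral>x. h (- x) \<partial>lborel) = half_moment d n"
    using lborel_integrable_real_affine[OF h(1), of "-1" 0] lborel_integral_real_affine[of "-1" h 0] h(2)
    by simp_all
  have ae: "AE x in lborel. sphere_density d x * x ^ n = h x + (-1) ^ n * h (- x)"
    using AE_lborel_singleton[of 0] by eventually_elim (simp add: h_def sphere_density_split)
  have hm [measurable]: "h \<in> borel_measurable borel" unfolding h_def by measurable
  have int: "integrable lborel (\<lambda>x. h x + (-1) ^ n * h (- x))"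
    using h(1) h'(1) by simp
  show "integrable (mu d) (\<lambda>x. x ^ n)"
    unfolding integral_mu(1)[OF mp]
    by (rule integrable_cong_AE[THEN iffD2, OF _ _ ae int]) measurable
  have "integral\<^sup>L (mu d) (\<lambda>x. x ^ n) = (\<integral>x. h x + (-1) ^ n * h (- x) \<partial>lborel)"
    unfolding integral_mu(2)[OF mp] by (rule integral_cong_AE) (use ae in simp_all)
  also have "\<dots> = moment d n"
    using h h' by (simp add: moment_def algebra_simps)
  finally show "integral\<^sup>L (mu d) (\<lambda>x. x ^ n) = moment d n" .
qed

lemma poly_integral:
  "integrable (mu d) (poly p)" "integral\<^sup>L (mu d) (poly p) = L p"
  unfolding poly_altdef[abs_def] moment_functional_def
  using power_integral by (simp_all add: integral_sum)

lemma relu_poly_integral: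
  "integrable (mu d) (\<lambda>x. relu x * poly p x)"
  "integral\<^sup>L (mu d) (\<lambda>x. relu x * poly p x) = Lh ([:0, 1:] * p)"
proof -
  have e: "(\<lambda>x. relu x * poly p x) = (\<lambda>x. \<Sum>i\<le>degree p. coeff p i * (relu x * x ^ i))"
    by (simp add: poly_altdef sum_distrib_left mult_ac)
  have "Lh ([:0, 1:] * p) = (\<Sum>i\<le>Suc (degree p). coeff ([:0, 1:] * p) i * half_moment d i)"
    by (rule moment_functional_bound) (simp add: mult_pCons_left degree_pCons_le)
  also have "\<dots> = (\<Sum>i\<le>degree p. coeff p i * half_moment d (i + 1))"
    by (subst sum.atMost_Suc_shift) (simp add: mult_pCons_left)
  finally have "Lh ([:0, 1:] * p) = (\<Sum>i\<le>degree p. coeff p i * half_moment d (i + 1))" .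
  then show "integrable (mu d) (\<lambda>x. relu x * poly p x)"
    and "integral\<^sup>L (mu d) (\<lambda>x. relu x * poly p x) = Lh ([:0, 1:] * p)"
    unfolding e using relu_power_integral by (simp_all add: integral_sum)
qed

end

section \<open>\<open>L\<^sup>2\<close> approximation of ReLU\<close>

lemma integrable_square_diff:
  fixes f g :: "'a \<Rightarrow> real"
  assumes [measurable]: "f \<in> borel_measurable M" "g \<in> borel_measurable M"
    and "integrable M (\<lambda>x. (f x)\<^sup>2)" "integrable M (\<lambda>x. (g x)\<^sup>2)"
  shows "integrable M (\<lambda>x. (f x - g x)\<^sup>2)"
proof (rule Bochner_Integration.integrable_bound)
  show "integrable M (\<lambda>x. 2 * (f x)\<^sup>2 + 2 * (g x)\<^sup>2)" using assms(3,4) by simp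
  have "(f x - g x)\<^sup>2 \<le> 2 * (f x)\<^sup>2 + 2 * (g x)\<^sup>2" for x
    using zero_le_power2[of "f x + g x"] by (simp add: power2_eq_square algebra_simps)
  then show "AE x in M. norm ((f x - g x)\<^sup>2) \<le> norm (2 * (f x)\<^sup>2 + 2 * (g x)\<^sup>2)"
    by simp
qed measurable

lemma L2_limit_unique:
  fixes g h :: "'a \<Rightarrow> real" and s :: "nat \<Rightarrow> 'a \<Rightarrow> real"
  assumes [measurable]: "g \<in> borel_measurable M" "h \<in> borel_measurable M" "\<And>N. s N \<in> borel_measurable M"
    and sq: "integrable M (\<lambda>x. (g x)\<^sup>2)" "integrable M (\<lambda>x. (h x)\<^sup>2)"
      "\<And>N. integrable M (\<lambda>x. (s N x)\<^sup>2)"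
    and lim: "(\<lambda>N. \<integral>x. (g x - s N x)\<^sup>2 \<partial>M) \<longlonglongrightarrow> 0"
      "(\<lambda>N. \<integral>x. (h x - s N x)\<^sup>2 \<partial>M) \<longlonglongrightarrow> 0"
  shows "AE x in M. g x = h x"
proof -
  have ig: "integrable M (\<lambda>x. (g x - s N x)\<^sup>2)" and ih: "integrable M (\<lambda>x. (h x - s N x)\<^sup>2)" for N
    using sq by (auto intro!: integrable_square_diff)
  have igh: "integrable M (\<lambda>x. (g x - h x)\<^sup>2)"
    using sq by (auto intro!: integrable_square_diff)
  have bound: "(\<integral>x. (g x - h x)\<^sup>2 \<partial>M)
      \<le> 2 * (\<integral>x. (g x - s N x)\<^sup>2 \<partial>M) + 2 * (\<integral>x. (h x - s N x)\<^sup>2 \<partial>M)"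
    for N
  proof -
    have "(g x - h x)\<^sup>2 \<le> 2 * (g x - s N x)\<^sup>2 + 2 * (h x - s N x)\<^sup>2" for x
      using zero_le_power2[of "g x + h x - 2 * s N x"] by (simp add: power2_eq_square algebra_simps)
    then have "(\<integral>x. (g x - h x)\<^sup>2 \<partial>M)
        \<le> (\<integral>x. 2 * (g x - s N x)\<^sup>2 + 2 * (h x - s N x)\<^sup>2 \<partial>M)"
      using igh ig[of N] ih[of N] by (intro integral_mono) auto
    also have "\<dots> = 2 * (\<integral>x. (g x - s N x)\<^sup>2 \<partial>M) + 2 * (\<integral>x. (h x - s N x)\<^sup>2 \<partial>M)"
      using ig[of N] ih[of N] by simp
    finally show ?thesis .
  qed
  have "(\<lambda>N. 2 * (\<integral>x. (g x - s N x)\<^sup>2 \<partial>M) + 2 * (\<integral>x. (h x - s N x)\<^sup>2 \<partial>M))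
      \<longlonglongrightarrow> 2 * 0 + 2 * 0"
    by (intro tendsto_intros lim)
  then have "(\<integral>x. (g x - h x)\<^sup>2 \<partial>M) \<le> 0"
    using bound by (intro LIMSEQ_le_const) auto
  moreover have "0 \<le> (\<integral>x. (g x - h x)\<^sup>2 \<partial>M)"
    by (rule integral_nonneg_AE) simp
  ultimately have "(\<integral>x. (g x - h x)\<^sup>2 \<partial>M) = 0" by simp
  then have "AE x in M. (g x - h x)\<^sup>2 = 0"
    using integral_nonneg_eq_0_iff_AE[OF igh] by simp
  then show ?thesis by eventually_elim simp
qed

definition relu_sq_err :: "nat \<Rightarrow> real poly \<Rightarrow> real" where
  "relu_sq_err d q = (\<integral>x. (relu x - poly q x)\<^sup>2 \<partial>mu d)"

definition relu_partial_sum :: "nat \<Rightarrow> nat \<Rightarrow> real poly" where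
  "relu_partial_sum d n = (\<Sum>l<n. smult (Bdk d l * relu_coeff d l) (geg_poly d l))"

context gegenbauer
begin

lemma relu_sq_integral:
  "integrable (mu d) (\<lambda>x. (relu x - poly q x)\<^sup>2)"
  "relu_sq_err d q = half_moment d 2 - 2 * Lh ([:0, 1:] * q) + L (q * q)"
proof -
  have e: "(\<lambda>x. (relu x - poly q x)\<^sup>2) = (\<lambda>x. relu x * x ^ 1 - 2 * (relu x * poly q x) + poly (q * q) x)"
    by (rule ext) (auto simp: relu_def max_def power2_eq_square algebra_simps)
  show "integrable (mu d) (\<lambda>x. (relu x - poly q x)\<^sup>2)"
    unfolding e
    by (intro Bochner_Integration.integrable_add Bochner_Integration.integrable_diff integrable_mult_right
        relu_power_integral relu_poly_integral poly_integral)
  show "relu_sq_err d q = half_moment d 2 - 2 * Lh ([:0, 1:] * q) + L (q * q)"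
    unfolding relu_sq_err_def e
    using relu_power_integral[of 1] relu_poly_integral[of q] poly_integral[of "q * q"]
    by (simp add: numeral_2_eq_2 del: poly_mult)
qed

lemma relu_sq_err_nonneg: "relu_sq_err d q \<ge> 0"
  unfolding relu_sq_err_def by (rule integral_nonneg_AE) simp

lemma moment_geg_mult: "L (G l * G j) = (if j = l then 1 / Bdk d l else 0)"
  using moment_geg_orthogonal[of l j] moment_geg_sq[of l] by auto

lemma relu_sq_err_geg_comb:
  "relu_sq_err d (\<Sum>l<n. smult (\<alpha> l) (G l))
     = half_moment d 2 - 2 * (\<Sum>l<n. \<alpha> l * relu_coeff d l) + (\<Sum>l<n. (\<alpha> l)\<^sup>2 / Bdk d l)"
proof -
  have "Lh ([:0, 1:] * (\<Sum>l<n. smult (\<alpha> l) (G l))) = (\<Sum>l<n. \<alpha> l * relu_coeff d l)"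
    by (simp add: sum_distrib_left moment_functional_sum moment_functional_smult relu_coeff_def)
  moreover have "L ((\<Sum>l<n. smult (\<alpha> l) (G l)) * (\<Sum>l<n. smult (\<alpha> l) (G l)))
      = (\<Sum>l<n. \<Sum>j<n. \<alpha> l * \<alpha> j * L (G l * G j))"
    by (simp add: sum_product moment_functional_sum moment_functional_smult mult_ac)
  moreover have "\<dots> = (\<Sum>l<n. (\<alpha> l)\<^sup>2 / Bdk d l)"
    by (simp add: moment_geg_mult power2_eq_square if_distrib sum.delta cong: if_cong)
  ultimately show ?thesis by (simp add: relu_sq_integral(2))
qed

lemma relu_sq_err_partial_sum:
  "relu_sq_err d (relu_partial_sum d n) = half_moment d 2 - (\<Sum>l<n. Bdk d l * (relu_coeff d l)\<^sup>2)"
proof -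
  have "(Bdk d l * relu_coeff d l)\<^sup>2 / Bdk d l = Bdk d l * (relu_coeff d l)\<^sup>2" for l
    using Bdk_pos[of l] by (simp add: power2_eq_square)
  then show ?thesis
    unfolding relu_partial_sum_def relu_sq_err_geg_comb
    by (simp add: power2_eq_square mult_ac)
qed

lemma relu_sq_err_partial_sum_le:
  "relu_sq_err d (relu_partial_sum d n) \<le> relu_sq_err d (\<Sum>l<n. smult (\<alpha> l) (G l))"
proof -
  have "(\<alpha> l - Bdk d l * relu_coeff d l)\<^sup>2 / Bdk d l
      = (\<alpha> l)\<^sup>2 / Bdk d l - 2 * (\<alpha> l * relu_coeff d l) + Bdk d l * (relu_coeff d l)\<^sup>2" for l
    using Bdk_pos[of l] by (simp add: field_simps power2_eq_square)
  then have "relu_sq_err d (\<Sum>l<n. smult (\<alpha> l) (G l)) - relu_sq_err d (relu_partial_sum d n)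
      = (\<Sum>l<n. (\<alpha> l - Bdk d l * relu_coeff d l)\<^sup>2 / Bdk d l)"
    unfolding relu_sq_err_geg_comb relu_sq_err_partial_sum
    by (simp add: sum.distrib sum_subtractf sum_distrib_left)
  also have "\<dots> \<ge> 0"
    using Bdk_pos by (intro sum_nonneg divide_nonneg_pos) auto
  finally show ?thesis by simp
qed

lemma relu_sq_err_partial_sum_mono:
  "m \<le> n \<Longrightarrow> relu_sq_err d (relu_partial_sum d n) \<le> relu_sq_err d (relu_partial_sum d m)"
  unfolding relu_sq_err_partial_sum
  by (auto intro!: sum_mono2 mult_nonneg_nonneg less_imp_le[OF Bdk_pos])

lemma relu_sq_err_le_sup:
  assumes "\<And>x. x \<in> {-1..1} \<Longrightarrow> \<bar>relu x - poly q x\<bar> \<le> e"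
  shows "relu_sq_err d q \<le> e\<^sup>2"
proof -
  have const: "(\<lambda>x. e\<^sup>2) = poly [:e\<^sup>2:]" by (simp add: fun_eq_iff)
  have "relu_sq_err d q \<le> (\<integral>x. e\<^sup>2 \<partial>mu d)"
    unfolding relu_sq_err_def
  proof (rule integral_mono_AE)
    show "AE x in mu d. (relu x - poly q x)\<^sup>2 \<le> e\<^sup>2"
      using AE_mu_interval
    proof eventually_elim
      case (elim x)
      then show ?case
        using power_mono[OF assms[OF elim], of 2] by simp
    qed
  qed (use relu_sq_integral(1) poly_integral(1) in \<open>auto simp: const\<close>)
  also have "\<dots> = e\<^sup>2"
    unfolding const poly_integral(2) by (simp add: moment_functional_def moment_0)
  finally show ?thesis .
qed

lemma relu_sq_err_partial_sum_tendsto: "(\<lambda>n. relu_sq_err d (relu_partial_sum d n)) \<longlonglongrightarrow> 0"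
proof (rule LIMSEQ_I)
  fix r :: real assume r: "r > 0"
  define e where "e = sqrt (r / 2)"
  have e: "e > 0" "e\<^sup>2 < r" unfolding e_def using r by auto
  have "continuous_on {-1..1} relu" unfolding relu_def by (intro continuous_intros)
  then obtain g where g: "real_polynomial_function g" "\<And>x. x \<in> {-1..1} \<Longrightarrow> \<bar>relu x - g x\<bar> < e"
    using Stone_Weierstrass_real_polynomial_function[OF compact_Icc _ e(1)] by blast
  obtain a N where g_sum: "g = (\<lambda>x. \<Sum>i\<le>N. a i * x ^ i)"
    using g(1) real_polynomial_function_iff_sum by blast
  define q where "q = (\<Sum>i\<le>N. monom (a i) i)"
  have "poly q = g" unfolding q_def g_sum by (simp add: poly_sum poly_monom fun_eq_iff)
  then have err: "relu_sq_err d q \<le> e\<^sup>2"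
    using g(2) by (intro relu_sq_err_le_sup) (auto intro: less_imp_le)
  have "degree q \<le> N"
    unfolding q_def by (intro degree_sum_le) (auto intro: order.trans[OF degree_monom_le])
  then obtain \<alpha> where "q = (\<Sum>l\<le>N. smult (\<alpha> l) (G l))" using geg_poly_span by blast
  then have "relu_sq_err d (relu_partial_sum d (Suc N)) \<le> relu_sq_err d q"
    using relu_sq_err_partial_sum_le[of "Suc N" \<alpha>] by (simp add: lessThan_Suc_atMost)
  then have "relu_sq_err d (relu_partial_sum d n) < r" if "Suc N \<le> n" for n
    using relu_sq_err_partial_sum_mono[OF that] err e by linarith
  then show "\<exists>n0. \<forall>n\<ge>n0. norm (relu_sq_err d (relu_partial_sum d n) - 0) < r"
    using relu_sq_err_nonneg by auto
qed

end

lemma Pk_sum_poly: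
  "(\<Sum>l\<in>{k..<N}. Pk d l f x)
     = poly (\<Sum>l\<in>{k..<N}. smult (Bdk d l * (\<integral>y. f y * Geg d l y \<partial>mu d)) (geg_poly d l)) x"
  by (simp add: Pk_def poly_sum)

context gegenbauer
begin

(* Pge is defined by Hilbert choice; uniqueness of L^2 limits up to null sets pins down its norm. *)
lemma L2sq_Pge:
  assumes g: "g \<in> borel_measurable (mu d)" "integrable (mu d) (\<lambda>x. (g x)\<^sup>2)"
    and lim: "(\<lambda>N. \<integral>x. (g x - (\<Sum>l\<in>{k..<N}. Pk d l f x))\<^sup>2 \<partial>mu d) \<longlonglongrightarrow> 0"
  shows "L2sq d (Pge d k f) = (\<integral>x. (g x)\<^sup>2 \<partial>mu d)"
proof -
  define P where "P h \<longleftrightarrow> h \<in> borel_measurable (mu d) \<and> integrable (mu d) (\<lambda>x. (h x)\<^sup>2) \<and>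
      (\<lambda>N. \<integral>x. (h x - (\<Sum>l\<in>{k..<N}. Pk d l f x))\<^sup>2 \<partial>mu d) \<longlonglongrightarrow> 0" for h
  have "P (Pge d k f)"
    unfolding Pge_def P_def[symmetric] by (rule someI[of P g]) (use g lim in \<open>simp add: P_def\<close>)
  then have G: "Pge d k f \<in> borel_measurable (mu d)" "integrable (mu d) (\<lambda>x. (Pge d k f x)\<^sup>2)"
    "(\<lambda>N. \<integral>x. (Pge d k f x - (\<Sum>l\<in>{k..<N}. Pk d l f x))\<^sup>2 \<partial>mu d) \<longlonglongrightarrow> 0"
    unfolding P_def by auto
  define s where "s N = (\<Sum>l\<in>{k..<N}. smult (Bdk d l * (\<integral>y. f y * Geg d l y \<partial>mu d)) (G l))" for N
  have s: "(\<Sum>l\<in>{k..<N}. Pk d l f x) = poly (s N) x" for N x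
    unfolding s_def Pk_sum_poly ..
  have "AE x in mu d. Pge d k f x = g x"
  proof (rule L2_limit_unique[where s = "\<lambda>N. poly (s N)"])
    have "(\<lambda>x. (poly (s N) x)\<^sup>2) = poly (s N * s N)" for N
      by (simp add: fun_eq_iff power2_eq_square)
    then show "integrable (mu d) (\<lambda>x. (poly (s N) x)\<^sup>2)" for N
      using poly_integral(1) by simp
    show "poly (s N) \<in> borel_measurable (mu d)" for N
      by (simp add: borel_measurable_mu)
  qed (use G g lim in \<open>simp_all add: s\<close>)
  then show ?thesis
    unfolding L2sq_def by (intro integral_cong_AE) (use G(1) g(1) in auto)
qed

lemma poly_relu_partial_sum: "poly (relu_partial_sum d n) x = (\<Sum>l<n. Bdk d l * relu_coeff d l * Geg d l x)"
  by (simp add: relu_partial_sum_def poly_sum)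

lemma Pk_relu: "Pk d l relu x = Bdk d l * relu_coeff d l * Geg d l x"
  using relu_poly_integral(2)[of "G l"] by (simp add: Pk_def relu_coeff_def)

lemma L2sq_Pge_relu: "L2sq d (Pge d n relu) = relu_sq_err d (relu_partial_sum d n)"
proof -
  define g where "g x = relu x - poly (relu_partial_sum d n) x" for x
  have ev: "eventually (\<lambda>N. relu_sq_err d (relu_partial_sum d N)
      = (\<integral>x. (g x - (\<Sum>l\<in>{n..<N}. Pk d l relu x))\<^sup>2 \<partial>mu d)) sequentially"
  proof (rule eventually_sequentiallyI)
    fix N assume "n \<le> N"
    then have "(\<Sum>l<N. Bdk d l * relu_coeff d l * Geg d l x)
        = (\<Sum>l<n. Bdk d l * relu_coeff d l * Geg d l x) + (\<Sum>l\<in>{n..<N}. Bdk d l * relu_coeff d l * Geg d l x)"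
      for x by (simp add: lessThan_atLeast0 sum.atLeastLessThan_concat)
    then show "relu_sq_err d (relu_partial_sum d N) = (\<integral>x. (g x - (\<Sum>l\<in>{n..<N}. Pk d l relu x))\<^sup>2 \<partial>mu d)"
      by (simp add: relu_sq_err_def g_def Pk_relu poly_relu_partial_sum algebra_simps)
  qed
  have "(\<lambda>N. \<integral>x. (g x - (\<Sum>l\<in>{n..<N}. Pk d l relu x))\<^sup>2 \<partial>mu d) \<longlonglongrightarrow> 0"
    using Lim_transform_eventually[OF relu_sq_err_partial_sum_tendsto ev] .
  moreover have "g \<in> borel_measurable (mu d)"
    unfolding borel_measurable_mu g_def by measurable
  moreover have "integrable (mu d) (\<lambda>x. (g x)\<^sup>2)"
    unfolding g_def by (rule relu_sq_integral)
  ultimately show ?thesis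
    using L2sq_Pge unfolding g_def relu_sq_err_def by blast
qed

lemma relu_coeff_sq_has_sum:
  "((\<lambda>l. Bdk d l * (relu_coeff d l)\<^sup>2) has_sum relu_sq_err d (relu_partial_sum d n)) {n..}"
proof -
  define t where "t = (\<lambda>l. Bdk d l * (relu_coeff d l)\<^sup>2)"
  have partial: "(\<Sum>i<K. t (n + i)) = relu_sq_err d (relu_partial_sum d n) - relu_sq_err d (relu_partial_sum d (n + K))"
    for K by (induction K) (simp_all add: relu_sq_err_partial_sum t_def)
  have "(\<lambda>K. relu_sq_err d (relu_partial_sum d (K + n))) \<longlonglongrightarrow> 0"
    by (rule LIMSEQ_ignore_initial_segment[OF relu_sq_err_partial_sum_tendsto])
  then have "(\<lambda>K. relu_sq_err d (relu_partial_sum d n) - relu_sq_err d (relu_partial_sum d (n + K)))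
      \<longlonglongrightarrow> relu_sq_err d (relu_partial_sum d n) - 0"
    by (intro tendsto_intros) (simp add: add.commute)
  then have "(\<lambda>i. t (n + i)) sums relu_sq_err d (relu_partial_sum d n)"
    unfolding sums_def partial by simp
  then have "(t has_sum relu_sq_err d (relu_partial_sum d n)) (plus n ` {0..})"
    by (subst has_sum_reindex)
       (auto simp: o_def t_def intro!: sums_nonneg_imp_has_sum mult_nonneg_nonneg less_imp_le[OF Bdk_pos])
  then show ?thesis using image_add_atLeast[of n 0] by (simp add: t_def)
qed

lemma relu_expansion_eq_partial_sum:
  "1 / (beta_d d * (real d - 1)) * Geg d 0 x + 1/2 * Geg d 1 x
     + (\<Sum>k\<in>{1..N}. (-1) ^ (k + 1) * dfact (2 * int k - 3)
          / (beta_d d * (\<Prod>j\<in>{0..k}. real d + 2 * real j - 1)) * Bdk d (2 * k) * Geg d (2 * k) x)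
   = poly (relu_partial_sum d (2 * N + 2)) x"
proof (induction N)
  case 0
  then show ?case
    using relu_coeff_0 relu_coeff_1 Bdk_1 d_ge_2
    by (simp add: poly_relu_partial_sum numeral_2_eq_2 Bdk_def mult.commute)
next
  case (Suc N)
  have "poly (relu_partial_sum d (2 * Suc N + 2)) x
      = poly (relu_partial_sum d (2 * N + 2)) x + Bdk d (2 * N + 2) * relu_coeff d (2 * N + 2) * Geg d (2 * N + 2) x"
    using relu_coeff_odd[of "N + 1"] by (simp add: poly_relu_partial_sum numeral_2_eq_2 algebra_simps)
  then show ?case
    using Suc relu_coeff_even[of "N + 1"] by (simp add: algebra_simps)
qed

lemma relu_expansion_L2_tendsto:
  "(\<lambda>N. \<integral>x. (relu x
      - (1 / (beta_d d * (real d - 1)) * Geg d 0 x + 1/2 * Geg d 1 x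
         + (\<Sum>k\<in>{1..N}. (-1) ^ (k + 1) * dfact (2 * int k - 3)
              / (beta_d d * (\<Prod>j\<in>{0..k}. real d + 2 * real j - 1)) * Bdk d (2 * k) * Geg d (2 * k) x)))\<^sup>2
      \<partial>mu d) \<longlonglongrightarrow> 0"
proof -
  have "strict_mono (\<lambda>N::nat. 2 * N + 2)" by (rule strict_monoI) simp
  from LIMSEQ_subseq_LIMSEQ[OF relu_sq_err_partial_sum_tendsto this]
  show ?thesis unfolding relu_expansion_eq_partial_sum by (simp add: o_def relu_sq_err_def)
qed

lemma relu_Pge_has_sum:
  assumes m: "m \<ge> 1"
  shows "((\<lambda>k. (dfact (2 * int k - 3))\<^sup>2 * Bdk d (2 * k)
              / ((beta_d d)\<^sup>2 * (\<Prod>j\<in>{0..k}. (real d + 2 * real j - 1)\<^sup>2)))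
          has_sum L2sq d (Pge d (2 * m) relu)) {m..}"
proof -
  define t where "t = (\<lambda>l. Bdk d l * (relu_coeff d l)\<^sup>2)"
  have "(t has_sum L2sq d (Pge d (2 * m) relu)) {2 * m..}"
    unfolding t_def L2sq_Pge_relu by (rule relu_coeff_sq_has_sum)
  also have "?this \<longleftrightarrow> (t has_sum L2sq d (Pge d (2 * m) relu)) ((\<lambda>k. 2 * k) ` {m..})"
  proof (rule has_sum_cong_neutral)
    fix l assume l: "l \<in> {2 * m..} - (\<lambda>k. 2 * k) ` {m..}"
    have "odd l"
    proof
      assume "even l"
      then obtain k where "l = 2 * k" ..
      with l show False by auto
    qed
    then obtain k where k: "l = 2 * k + 1" ..
    with l m have "k \<ge> 1" by simp
    then show "t l = 0" using relu_coeff_odd by (simp add: t_def k)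
  qed auto
  also have "\<dots> \<longleftrightarrow> ((t \<circ> (\<lambda>k. 2 * k)) has_sum L2sq d (Pge d (2 * m) relu)) {m..}"
    by (rule has_sum_reindex) (simp add: inj_on_def)
  also have "\<dots> \<longleftrightarrow> ?thesis"
  proof (rule has_sum_cong)
    fix k assume "k \<in> {m..}"
    then have "k \<ge> 1" using m by simp
    moreover have "((-1::real) ^ k)\<^sup>2 = 1"
      by (simp add: power2_eq_square power_mult_distrib[symmetric])
    ultimately show "(t \<circ> (\<lambda>k. 2 * k)) k = (dfact (2 * int k - 3))\<^sup>2 * Bdk d (2 * k)
              / ((beta_d d)\<^sup>2 * (\<Prod>j\<in>{0..k}. (real d + 2 * real j - 1)\<^sup>2))"
      by (simp add: t_def relu_coeff_even power_mult_distrib power_divide prod_power_distrib)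
  qed
  finally show ?thesis .
qed

end

theorem lemma38:
  fixes d :: nat
  assumes "d \<ge> 2"
  shows "((\<lambda>N. \<integral>x. (relu x
            - (1 / (Beta (1/2) ((real d - 1) / 2) * (real d - 1)) * Geg d 0 x
               + 1/2 * Geg d 1 x
               + (\<Sum>k\<in>{1..N}. (-1) ^ (k + 1) * dfact (2 * int k - 3)
                    / (Beta (1/2) ((real d - 1) / 2) * (\<Prod>j\<in>{0..k}. real d + 2 * real j - 1))
                    * Bdk d (2 * k) * Geg d (2 * k) x)))\<^sup>2 \<partial>mu d)
          \<longlonglongrightarrow> 0)
       \<and> (\<forall>m::nat. m \<ge> 1 \<longrightarrow>
          ((\<lambda>k. (dfact (2 * int k - 3))\<^sup>2 * Bdk d (2 * k)
                 / ((Beta (1/2) ((real d - 1) / 2))\<^sup>2 * (\<Prod>j\<in>{0..k}. (real d + 2 * real j - 1)\<^sup>2)))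
             has_sum L2sq d (Pge d (2 * m) relu)) {m..})"
proof -
  interpret gegenbauer d using assms by unfold_locales
  show ?thesis using relu_expansion_L2_tendsto relu_Pge_has_sum by blast
qed

end
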